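(* (Crossing lemma) Let $G=(U,V,E)$ be a path-restricted ordered bipartite graph. Let $U=U_1\cup U_2$ and $V=V_1\cup V_2$ be partitions such that every vertex of $U_1$ has higher order than every vertex of $U_2$ and every vertex of $V_1$ has higher order than every vertex of $V_2$. (1) If every vertex of $U_1$ has a neighbour in $V_1$, then the number of edges between $U_1$ and $V_2$ is at most $|U_1|+|V_2|$. (2) If every vertex of $V_1$ has a neighbour in $U_1$, then the number of edges between $V_1$ and $U_2$ is at most $|V_1|+|U_2|$.
   Context: An ordered bipartite graph is $G=(U,V,E)$ where $U,V$ are disjoint finite sets, each carrying a strict total order (both written $<$), and $E\subseteq U\times V$. A path is a sequence of edges in which consecutive edges share a vertex. A path visiting the vertices of $U$ in the order $u_1,\dots,u_k$ and those of $V$ in the order $v_1,\dots,v_l$ is a forward path if either $u_1<\dots<u_k$ and $v_1<\dots<v_l$, or $u_1>\dots>u_k$ and $v_1>\dots>v_l$. For $x\le y$ in $U$ write $\langle x,y\rangle=\{u\in U: x\le u\le y\}$, and similarly in $V$. If $u_a<u_b$ are the smallest and largest $U$-vertices and $v_c<v_d$ the smallest and largest $V$-vertices of a forward path $P$, the range of $P$ is $\{\langle u_a,u_b\rangle,\langle v_c,v_d\rangle\}$. A vertex of $P$ is non-terminal if it is adjacent along $P$ to two vertices of $P$. An edge is a back edge to $P$ if either it is $(u_a,v_j)$ with $v_j\in\langle v_c,v_d\rangle$ and $v_j>v'$ for some non-terminal vertex $v'\in V$ of $P$, or it is $(u_i,v_c)$ with $u_i\in\langle u_a,u_b\rangle$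 and $u_i>u'$ for some non-terminal vertex $u'\in U$ of $P$. $G$ is a path-restricted ordered bipartite graph (PRBG) if no forward path in $G$ has a back edge in $E$. (In the paper's drawings vertices are placed from right to left in increasing order, so $U_1,V_1$ lie to the left and $U_2,V_2$ to the right of a separating line.) *)

theory Defs
  imports Main
begin

(* Vertices of an ordered bipartite graph: U-vertices have type 'u, V-vertices type 'v
   (so U and V are disjoint); each type carries the strict total order <.
   A path is represented by its alternating vertex sequence (Inl u for u in U, Inr v for v in V). *)

definition adj :: "('u \<times> 'v) set \<Rightarrow> ('u + 'v) \<Rightarrow> ('u + 'v) \<Rightarrow> bool" where
  "adj E x y \<longleftrightarrow>
     (case (x, y) of (Inl u, Inr v) \<Rightarrow> (u, v) \<in> E
                   | (Inr v, Inl u) \<Rightarrow> (u, v) \<in> E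
                   | _ \<Rightarrow> False)"

definition is_path :: "('u \<times> 'v) set \<Rightarrow> ('u + 'v) list \<Rightarrow> bool" where
  "is_path E p \<longleftrightarrow> 2 \<le> length p \<and> (\<forall>i. Suc i < length p \<longrightarrow> adj E (p ! i) (p ! Suc i))"

definition Uverts :: "('u + 'v) list \<Rightarrow> 'u list" where
  "Uverts p = map projl (filter isl p)"

definition Vverts :: "('u + 'v) list \<Rightarrow> 'v list" where
  "Vverts p = map projr (filter (\<lambda>x. \<not> isl x) p)"

definition forward_path :: "('u::linorder \<times> 'v::linorder) set \<Rightarrow> ('u + 'v) list \<Rightarrow> bool" where
  "forward_path E p \<longleftrightarrow> is_path E p \<and>
     ((sorted_wrt (<) (Uverts p) \<and> sorted_wrt (<) (Vverts p)) \<or>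
      (sorted_wrt (>) (Uverts p) \<and> sorted_wrt (>) (Vverts p)))"

definition non_terminal :: "('u + 'v) list \<Rightarrow> ('u + 'v) \<Rightarrow> bool" where
  "non_terminal p x \<longleftrightarrow> (\<exists>i. 0 < i \<and> Suc i < length p \<and> p ! i = x)"

definition back_edge :: "('u::linorder + 'v::linorder) list \<Rightarrow> ('u \<times> 'v) \<Rightarrow> bool" where
  "back_edge p e \<longleftrightarrow>
     (let ua = Min (set (Uverts p)); ub = Max (set (Uverts p));
          vc = Min (set (Vverts p)); vd = Max (set (Vverts p));
          u = fst e; v = snd e
      in (u = ua \<and> vc \<le> v \<and> v \<le> vd \<and> (\<exists>v'. non_terminal p (Inr v') \<and> v' < v)) \<or>
         (v = vc \<and> ua \<le> u \<and> u \<le> ub \<and> (\<exists>u'. non_terminal p (Inl u') \<and> u' < u)))"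

definition PRBG :: "'u::linorder set \<Rightarrow> 'v::linorder set \<Rightarrow> ('u \<times> 'v) set \<Rightarrow> bool" where
  "PRBG U V E \<longleftrightarrow> finite U \<and> finite V \<and> E \<subseteq> U \<times> V \<and>
     \<not> (\<exists>p e. forward_path E p \<and> e \<in> E \<and> back_edge p e)"

end

theory Submission
  imports Defs
begin

text \<open>An edge between U1 and V2 (or between U2 and V1) is either the highest edge at its U-vertex
  or the highest edge at its V-vertex: otherwise a forward path of length three, leaving the
  corner through an edge into the upper part, would have a back edge. Charging each edge to
  such an extremal endpoint gives the bound.\<close>

definition corner_free :: "('a::order \<times> 'b::order) set \<Rightarrow> bool" where
  "corner_free S \<longleftrightarrow>
     \<not> (\<exists>u v u' v'. (u, v) \<in> S \<and> (u, v') \<in> S \<and> (u', v) \<in> S \<and> u < u' \<and> v < v')"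

lemma card_le_if_corner_free:
  fixes S :: "('a::linorder \<times> 'b::linorder) set"
  assumes "corner_free S" and "S \<subseteq> X \<times> Y" and "finite X" and "finite Y"
  shows "card S \<le> card X + card Y"
proof -
  define A where "A = {(u, v) \<in> S. \<forall>v'. (u, v') \<in> S \<longrightarrow> v' \<le> v}"
  define B where "B = {(u, v) \<in> S. \<forall>u'. (u', v) \<in> S \<longrightarrow> u' \<le> u}"
  have "finite S" using assms(2-4) finite_subset by blast
  then have fin: "finite A" "finite B" unfolding A_def B_def by (auto intro: finite_subset)
  have "S \<subseteq> A \<union> B"
    using \<open>corner_free S\<close> unfolding corner_free_def A_def B_def by (fastforce simp: not_le)
  then have "card S \<le> card (A \<union> B)" using fin by (intro card_mono) auto
  also have "\<dots> \<le> card A + card B" by (rule card_Un_le)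
  also have "card A \<le> card X"
    using assms(2,3) by (intro card_inj_on_le[of fst])
      (auto simp: A_def inj_on_def intro: order_antisym)
  also have "card B \<le> card Y"
    using assms(2,4) by (intro card_inj_on_le[of snd])
      (auto simp: B_def inj_on_def intro: order_antisym)
  finally show ?thesis by simp
qed

lemma PRBG_no_back_edge_UVUV:
  fixes u u' :: "'u::linorder" and v v' w :: "'v::linorder"
  assumes "PRBG U V E"
    and "(u, v) \<in> E" "(u', v) \<in> E" "(u', w) \<in> E" "(u, v') \<in> E"
    and "u < u'" "v < v'" "v' \<le> w"
  shows False
proof -
  let ?p = "[Inl u, Inr v, Inl u', Inr w] :: ('u + 'v) list"
  have U: "Uverts ?p = [u, u']" and V: "Vverts ?p = [v, w]"
    by (simp_all add: Uverts_def Vverts_def)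
  have "forward_path E ?p"
    unfolding forward_path_def is_path_def U V using assms
    by (auto simp: adj_def nth_Cons split: nat.splits)
  moreover have "non_terminal ?p (Inr v)"
    unfolding non_terminal_def by (rule exI[of _ 1]) simp
  then have "back_edge ?p (u, v')"
    unfolding back_edge_def U V Let_def using assms by auto
  ultimately show False using assms unfolding PRBG_def by blast
qed

lemma PRBG_no_back_edge_VUVU:
  fixes u u' w :: "'u::linorder" and v v' :: "'v::linorder"
  assumes "PRBG U V E"
    and "(u, v) \<in> E" "(u, v') \<in> E" "(w, v') \<in> E" "(u', v) \<in> E"
    and "u < u'" "u' \<le> w" "v < v'"
  shows False
proof -
  let ?p = "[Inr v, Inl u, Inr v', Inl w] :: ('u + 'v) list"
  have U: "Uverts ?p = [u, w]" and V: "Vverts ?p = [v, v']"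
    by (simp_all add: Uverts_def Vverts_def)
  have "forward_path E ?p"
    unfolding forward_path_def is_path_def U V using assms
    by (auto simp: adj_def nth_Cons split: nat.splits)
  moreover have "non_terminal ?p (Inl u)"
    unfolding non_terminal_def by (rule exI[of _ 1]) simp
  then have "back_edge ?p (u', v)"
    unfolding back_edge_def U V Let_def using assms by auto
  ultimately show False using assms unfolding PRBG_def by blast
qed

lemma PRBG_corner_free_upper_U_lower_V:
  assumes "PRBG U V E"
    and "\<forall>u\<in>U1. \<exists>v\<in>V1. (u, v) \<in> E"
    and "\<forall>x\<in>V1. \<forall>y\<in>V2. y < x"
  shows "corner_free {(u, v) \<in> E. u \<in> U1 \<and> v \<in> V2}"
  unfolding corner_free_def
proof clarsimp
  fix u v u' v'
  assume "(u, v) \<in> E" "(u, v') \<in> E" "(u', v) \<in> E" "u \<in> U1" "u' \<in> U1"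
    "v \<in> V2" "v' \<in> V2" "u < u'" "v < v'"
  moreover obtain w where "w \<in> V1" "(u', w) \<in> E" using assms(2) \<open>u' \<in> U1\<close> by blast
  moreover have "v' \<le> w" using assms(3) \<open>w \<in> V1\<close> \<open>v' \<in> V2\<close> by (simp add: less_imp_le)
  ultimately show False using PRBG_no_back_edge_UVUV[OF assms(1)] by blast
qed

lemma PRBG_corner_free_upper_V_lower_U:
  assumes "PRBG U V E"
    and "\<forall>v\<in>V1. \<exists>u\<in>U1. (u, v) \<in> E"
    and "\<forall>x\<in>U1. \<forall>y\<in>U2. y < x"
  shows "corner_free {(u, v) \<in> E. v \<in> V1 \<and> u \<in> U2}"
  unfolding corner_free_def
proof clarsimp
  fix u v u' v'
  assume "(u, v) \<in> E" "(u, v') \<in> E" "(u', v) \<in> E" "v \<in> V1" "v' \<in> V1"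
    "u \<in> U2" "u' \<in> U2" "u < u'" "v < v'"
  moreover obtain w where "w \<in> U1" "(w, v') \<in> E" using assms(2) \<open>v' \<in> V1\<close> by blast
  moreover have "u' \<le> w" using assms(3) \<open>w \<in> U1\<close> \<open>u' \<in> U2\<close> by (simp add: less_imp_le)
  ultimately show False using PRBG_no_back_edge_VUVU[OF assms(1)] by blast
qed

theorem lemma7:
  fixes U U1 U2 :: "'u::linorder set" and V V1 V2 :: "'v::linorder set"
    and E :: "('u \<times> 'v) set"
  assumes "PRBG U V E"
    and "U = U1 \<union> U2" and "U1 \<inter> U2 = {}"
    and "V = V1 \<union> V2" and "V1 \<inter> V2 = {}"
    and "\<forall>x\<in>U1. \<forall>y\<in>U2. y < x"
    and "\<forall>x\<in>V1. \<forall>y\<in>V2. y < x"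
  shows "((\<forall>u\<in>U1. \<exists>v\<in>V1. (u, v) \<in> E) \<longrightarrow>
            card {(u, v) \<in> E. u \<in> U1 \<and> v \<in> V2} \<le> card U1 + card V2)
       \<and> ((\<forall>v\<in>V1. \<exists>u\<in>U1. (u, v) \<in> E) \<longrightarrow>
            card {(u, v) \<in> E. v \<in> V1 \<and> u \<in> U2} \<le> card V1 + card U2)"
proof (intro conjI impI)
  have fin: "finite U1" "finite U2" "finite V1" "finite V2"
    using assms(1,2,4) unfolding PRBG_def by auto
  show "card {(u, v) \<in> E. u \<in> U1 \<and> v \<in> V2} \<le> card U1 + card V2"
    if "\<forall>u\<in>U1. \<exists>v\<in>V1. (u, v) \<in> E"
    by (rule card_le_if_corner_free[OF PRBG_corner_free_upper_U_lower_V[OF assms(1) that assms(7)]])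
      (use fin in auto)
  show "card {(u, v) \<in> E. v \<in> V1 \<and> u \<in> U2} \<le> card V1 + card U2"
    if "\<forall>v\<in>V1. \<exists>u\<in>U1. (u, v) \<in> E"
    unfolding add.commute[of "card V1"]
    by (rule card_le_if_corner_free[OF PRBG_corner_free_upper_V_lower_U[OF assms(1) that assms(6)]])
      (use fin in auto)
qed

end
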